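(* Let $\mathbf{M}$ be a nonsingular $D\times D$ integer matrix and $\bm{\Gamma}_1,\dots,\bm{\Gamma}_L$ ($L\ge2$) nonsingular $D\times D$ integer matrices that are pairwise commutative and coprime; set $\mathbf{M}_i=\mathbf{M}\bm{\Gamma}_i$. Let $\mathbf{U}\mathbf{M}\mathbf{V}=\bm{\Lambda}$ be a Smith normal form decomposition ($\mathbf{U},\mathbf{V}$ unimodular, $\bm{\Lambda}$ diagonal). Fix unimodular $\mathbf{U}_1$ and let $\mathbf{m}\in\mathcal{A}_1$ with remainders $\mathbf{r}_i=\langle\mathbf{m}\rangle_{\mathbf{M}_i}$ and folding vectors $\mathbf{n}_i$ ($\mathbf{m}=\mathbf{M}_i\mathbf{n}_i+\mathbf{r}_i$). Let $\widetilde{\mathbf{r}}_i=\mathbf{r}_i+\triangle\mathbf{r}_i\in\mathbb{Z}^D$ be erroneous remainders and let $\widetilde{\mathbf{n}}_1,\dots,\widetilde{\mathbf{n}}_L$ be the output of Algorithm 2. Define $\bm{\vartheta}_i=Q_{\bm{\Lambda}}(\mathbf{U}(\triangle\mathbf{r}_i-\triangle\mathbf{r}_1))$, $2\le i\le L$. Then $\widetilde{\mathbf{n}}_i=\mathbf{n}_i$ for all $i$ if and only if $\bm{\vartheta}_i=\mathbf{0}$ for all $2\le i\le L$. Moreover: (1) if $\lVert\mathbf{U}(\triangle\mathbf{r}_i-\triangle\mathbf{r}_1)\rVert<\lambda_{\mathrm{LAT}(\bm{\Lambda})}/2$ for all $2\le i\le L$, then all $\bm{\vartheta}_i=\mathbf{0}$;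 (2) if $\lVert\triangle\mathbf{r}_i\rVert\le\tau$ for all $i$ and $\tau<\lambda_{\mathrm{LAT}(\bm{\Lambda})}/(4\lVert\mathbf{U}\rVert_* )$, then all $\bm{\vartheta}_i=\mathbf{0}$. When the folding vectors are correctly determined, $\widetilde{\mathbf{m}}=\frac1L\sum_{i=1}^L(\mathbf{M}_i\mathbf{n}_i+\widetilde{\mathbf{r}}_i)$ satisfies $\lVert\widetilde{\mathbf{m}}-\mathbf{m}\rVert\le\tau$ whenever $\lVert\triangle\mathbf{r}_i\rVert\le\tau$ for all $i$.
   Context: All matrices are $D\times D$; unimodular means integer with determinant $\pm1$; commuting nonsingular integer matrices are coprime if all their common left (equivalently right) divisors are unimodular. $\mathrm{LAT}(\mathbf{A})=\{\mathbf{A}\mathbf{n}:\mathbf{n}\in\mathbb{Z}^D\}$. $\mathcal{N}(\mathbf{A})=\{\mathbf{k}\in\mathbb{Z}^D:\mathbf{k}=\mathbf{A}\mathbf{x},\ \mathbf{x}\in[0,1)^D\}$; $\langle\mathbf{m}\rangle_{\mathbf{A}}$ is the unique $\mathbf{r}\in\mathcal{N}(\mathbf{A})$ with $\mathbf{m}-\mathbf{r}\in\mathrm{LAT}(\mathbf{A})$; $\mathbf{x}\equiv\mathbf{y}\bmod\mathbf{A}$ means $\mathbf{x}-\mathbf{y}\in\mathrm{LAT}(\mathbf{A})$. $\mathcal{A}_1=\{\mathbf{m}\in\mathbb{Z}^D:\lfloor\mathbf{M}_1^{-1}\mathbf{m}\rfloor\in\mathcal{N}(\bm{\Gamma}_2\cdots\bm{\Gamma}_L\mathbf{U}_1)\}$.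 $\lVert\cdot\rVert$ is a fixed norm on $\mathbb{R}^D$, $\lVert\mathbf{U}\rVert_*=\sup_{\lVert\mathbf{x}\rVert=1}\lVert\mathbf{U}\mathbf{x}\rVert$, and $\lambda_{\mathrm{LAT}(\bm{\Lambda})}=\min\{\lVert\mathbf{v}\rVert:\mathbf{v}\in\mathrm{LAT}(\bm{\Lambda})\setminus\{\mathbf{0}\}\}$. $Q_{\bm{\Lambda}}:\mathbb{R}^D\to\mathrm{LAT}(\bm{\Lambda})$ is a fixed closest-lattice-point map ($Q_{\bm{\Lambda}}(\mathbf{w})\in\arg\min_{\mathbf{p}\in\mathrm{LAT}(\bm{\Lambda})}\lVert\mathbf{p}-\mathbf{w}\rVert$) with $Q_{\bm{\Lambda}}(\mathbf{w}+\mathbf{l})=Q_{\bm{\Lambda}}(\mathbf{w})+\mathbf{l}$ for $\mathbf{l}\in\mathrm{LAT}(\bm{\Lambda})$. Algorithm 2: (i) $\mathbf{p}_i=Q_{\bm{\Lambda}}(\mathbf{U}(\widetilde{\mathbf{r}}_i-\widetilde{\mathbf{r}}_1))$, $2\le i\le L$; (ii) $\bm{\varpi}_i=\langle\bm{\Lambda}^{-1}\mathbf{p}_i\rangle_{\mathbf{V}^{-1}\bm{\Gamma}_i}$; (iii) $\bm{\psi}_1$ is the unique element of $\mathcal{N}(\mathbf{V}^{-1}\bm{\Gamma}_1\bm{\Gamma}_2\cdots\bm{\Gamma}_L\mathbf{U}_1)$ with $\bm{\psi}_1\equiv\mathbf{0}\bmod\mathbf{V}^{-1}\bm{\Gamma}_1$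 and $\bm{\psi}_1\equiv\bm{\varpi}_i\bmod\mathbf{V}^{-1}\bm{\Gamma}_i$ for $2\le i\le L$; (iv) $\widetilde{\mathbf{n}}_1=\bm{\Gamma}_1^{-1}\mathbf{V}\bm{\psi}_1$ and $\widetilde{\mathbf{n}}_i=\bm{\Gamma}_i^{-1}\mathbf{V}(\bm{\psi}_1-\bm{\Lambda}^{-1}\mathbf{p}_i)$ for $2\le i\le L$. *)

theory Defs
  imports "HOL-Analysis.Analysis"
begin

text \<open>Dimension D is the cardinality of the finite index type 'n.
  Integer vectors/matrices are real vectors/matrices with integral entries.\<close>

definition int_vec :: "real^'n \<Rightarrow> bool" where
  "int_vec x \<longleftrightarrow> (\<forall>j. x$j \<in> \<int>)"

definition int_mat :: "real^'n^'n \<Rightarrow> bool" where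
  "int_mat A \<longleftrightarrow> (\<forall>i j. A$i$j \<in> \<int>)"

definition nonsingular_int :: "real^'n^'n \<Rightarrow> bool" where
  "nonsingular_int A \<longleftrightarrow> int_mat A \<and> det A \<noteq> 0"

definition unimodular :: "real^'n^'n \<Rightarrow> bool" where
  "unimodular A \<longleftrightarrow> int_mat A \<and> (det A = 1 \<or> det A = -1)"

definition is_diag :: "real^'n^'n \<Rightarrow> bool" where
  "is_diag A \<longleftrightarrow> (\<forall>i j. i \<noteq> j \<longrightarrow> A$i$j = 0)"

definition left_divides :: "real^'n^'n \<Rightarrow> real^'n^'n \<Rightarrow> bool" where
  "left_divides D A \<longleftrightarrow> int_mat D \<and> (\<exists>X. int_mat X \<and> A = D ** X)"

definition coprime_mat :: "real^'n^'n \<Rightarrow> real^'n^'n \<Rightarrow> bool" where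
  "coprime_mat A B \<longleftrightarrow> (\<forall>D. left_divides D A \<and> left_divides D B \<longrightarrow> unimodular D)"

definition LAT :: "real^'n^'n \<Rightarrow> (real^'n) set" where
  "LAT A = {A *v k | k. int_vec k}"

definition NN :: "real^'n^'n \<Rightarrow> (real^'n) set" where
  "NN A = {k. int_vec k \<and> (\<exists>x. (\<forall>j. 0 \<le> x$j \<and> x$j < 1) \<and> k = A *v x)}"

definition rem :: "real^'n^'n \<Rightarrow> real^'n \<Rightarrow> real^'n" where
  "rem A m = (THE r. r \<in> NN A \<and> m - r \<in> LAT A)"

definition congmod :: "real^'n \<Rightarrow> real^'n \<Rightarrow> real^'n^'n \<Rightarrow> bool" where
  "congmod x y A \<longleftrightarrow> x - y \<in> LAT A"

definition vfloor :: "real^'n \<Rightarrow> real^'n" where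
  "vfloor x = (\<chi> j. of_int \<lfloor>x$j\<rfloor>)"

definition mprod :: "(nat \<Rightarrow> real^'n^'n) \<Rightarrow> nat \<Rightarrow> nat \<Rightarrow> real^'n^'n" where
  "mprod G a b = foldr (\<lambda>i P. G i ** P) [a..<Suc b] (mat 1)"

definition A1 :: "real^'n^'n \<Rightarrow> (nat \<Rightarrow> real^'n^'n) \<Rightarrow> nat \<Rightarrow> real^'n^'n \<Rightarrow> (real^'n) set" where
  "A1 M G L U1 = {m. int_vec m \<and>
      vfloor (matrix_inv (M ** G 1) *v m) \<in> NN (mprod G 2 L ** U1)}"

definition is_norm :: "(real^'n \<Rightarrow> real) \<Rightarrow> bool" where
  "is_norm nrm \<longleftrightarrow> (\<forall>x. nrm x = 0 \<longleftrightarrow> x = 0) \<and> (\<forall>c x. nrm (c *\<^sub>R x) = \<bar>c\<bar> * nrm x)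
     \<and> (\<forall>x y. nrm (x + y) \<le> nrm x + nrm y)"

definition opnorm :: "(real^'n \<Rightarrow> real) \<Rightarrow> real^'n^'n \<Rightarrow> real" where
  "opnorm nrm U = (SUP x\<in>{x. nrm x = 1}. nrm (U *v x))"

definition lat_min :: "(real^'n \<Rightarrow> real) \<Rightarrow> real^'n^'n \<Rightarrow> real" where
  "lat_min nrm A = Inf (nrm ` (LAT A - {0}))"

definition closest_point_map :: "(real^'n \<Rightarrow> real) \<Rightarrow> real^'n^'n \<Rightarrow> (real^'n \<Rightarrow> real^'n) \<Rightarrow> bool" where
  "closest_point_map nrm Lam Q \<longleftrightarrow>
     (\<forall>w. Q w \<in> LAT Lam \<and> (\<forall>p\<in>LAT Lam. nrm (Q w - w) \<le> nrm (p - w)))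
   \<and> (\<forall>w l. l \<in> LAT Lam \<longrightarrow> Q (w + l) = Q w + l)"

definition alg2 :: "(real^'n \<Rightarrow> real^'n) \<Rightarrow> real^'n^'n \<Rightarrow> real^'n^'n \<Rightarrow> real^'n^'n
    \<Rightarrow> (nat \<Rightarrow> real^'n^'n) \<Rightarrow> nat \<Rightarrow> real^'n^'n \<Rightarrow> (nat \<Rightarrow> real^'n) \<Rightarrow> nat \<Rightarrow> real^'n" where
  "alg2 Q U V Lam G L U1 rt =
    (let p = (\<lambda>i. Q (U *v (rt i - rt 1)));
         Vi = matrix_inv V;
         w = (\<lambda>i. rem (Vi ** G i) (matrix_inv Lam *v p i));
         psi = (THE psi. psi \<in> NN (Vi ** mprod G 1 L ** U1)
                   \<and> congmod psi 0 (Vi ** G 1)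
                   \<and> (\<forall>i\<in>{2..L}. congmod psi (w i) (Vi ** G i)))
     in (\<lambda>i. if i = 1 then matrix_inv (G 1) *v (V *v psi)
             else matrix_inv (G i) *v (V *v (psi - matrix_inv Lam *v p i))))"

end

theory Submission
  imports Defs
begin

text \<open>The remainders satisfy r_i - r_1 = M (G_1 n_1 - G_i n_i), so U (r~_i - r~_1) is the error
  U (dr_i - dr_1) shifted by the lattice point Lam V^-1 (G_1 n_1 - G_i n_i); by equivariance of Q,
  step (i) returns p_i = theta_i + Lam V^-1 (G_1 n_1 - G_i n_i). If all theta_i vanish, then
  V^-1 G_1 n_1 solves the congruences of step (iii), and it is their only solution because the
  lattices of pairwise coprime commuting G_i intersect in the lattice of G_1 ... G_L; this in turn
  holds because coprime A, B are comaximal, LAT A + LAT B = Z^D (a proper subgroup containing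
  LAT A + LAT B would be the lattice of a non-unimodular common left divisor). Conversely, correct
  folding vectors force Lam^-1 p_i = V^-1 (G_1 n_1 - G_i n_i), i.e. theta_i = 0. The error bounds
  follow from the closest-point property and the triangle inequality.\<close>

lemma int_vec_add: "int_vec x \<Longrightarrow> int_vec y \<Longrightarrow> int_vec (x + y)"
  by (simp add: int_vec_def)

lemma int_vec_diff: "int_vec x \<Longrightarrow> int_vec y \<Longrightarrow> int_vec (x - y)"
  by (simp add: int_vec_def)

lemma int_vec_minus: "int_vec x \<Longrightarrow> int_vec (- x)"
  by (simp add: int_vec_def)

lemma int_vec_zero: "int_vec 0"
  by (simp add: int_vec_def)

lemma int_vec_scaleR: "c \<in> \<int> \<Longrightarrow> int_vec x \<Longrightarrow> int_vec (c *\<^sub>R x)"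
  by (simp add: int_vec_def)

lemma int_vec_axis: "int_vec (axis k 1)"
  unfolding int_vec_def axis_def by auto

lemma int_vec_matrix_vector_mult: "int_mat A \<Longrightarrow> int_vec x \<Longrightarrow> int_vec (A *v x)"
  unfolding int_vec_def int_mat_def matrix_vector_mult_def
  by (auto intro!: Ints_sum Ints_mult)

lemma int_mat_matrix_mult: "int_mat A \<Longrightarrow> int_mat B \<Longrightarrow> int_mat (A ** B)"
  unfolding int_mat_def matrix_matrix_mult_def
  by (auto intro!: Ints_sum Ints_mult)

lemma int_mat_mat_1: "int_mat (mat 1)"
  unfolding int_mat_def mat_def by auto

lemma int_mat_det_Ints: "int_mat A \<Longrightarrow> det A \<in> \<int>"
  unfolding det_def int_mat_def
  by (auto intro!: Ints_sum Ints_mult Ints_prod simp: sign_def)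

lemma nonsingular_int_matrix_mult:
  "nonsingular_int A \<Longrightarrow> nonsingular_int B \<Longrightarrow> nonsingular_int (A ** B)"
  unfolding nonsingular_int_def by (simp add: int_mat_matrix_mult det_mul)

lemma matrix_vector_mult_minus:
  fixes A :: "'a::ring_1^'n^'m"
  shows "A *v (- x) = - (A *v x)"
  using matrix_vector_mult_diff_distrib[of A 0 x] by simp

lemma matrix_inv_mult:
  fixes A :: "real^'n^'n"
  assumes "det A \<noteq> 0"
  shows matrix_mul_matrix_inv: "A ** matrix_inv A = mat 1"
    and matrix_inv_mul_matrix: "matrix_inv A ** A = mat 1"
proof -
  have "invertible A" using assms invertible_det_nz by blast
  then have "\<exists>A'. A ** A' = mat 1 \<and> A' ** A = mat 1" unfolding invertible_def by blast
  from someI_ex[OF this] show "A ** matrix_inv A = mat 1" "matrix_inv A ** A = mat 1"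
    unfolding matrix_inv_def by auto
qed

lemma matrix_inv_vector_mult:
  fixes A :: "real^'n^'n"
  assumes "det A \<noteq> 0"
  shows "A *v (matrix_inv A *v x) = x" "matrix_inv A *v (A *v x) = x"
  using matrix_inv_mult[OF assms] by (simp_all add: matrix_vector_mul_assoc)

lemma matrix_vector_mult_cancel:
  fixes A :: "real^'n^'n"
  assumes "det A \<noteq> 0"
  shows "A *v x = A *v y \<longleftrightarrow> x = y"
  by (metis assms matrix_inv_vector_mult(2))

lemma matrix_inv_vector_mult_eq_iff:
  fixes A :: "real^'n^'n"
  assumes "det A \<noteq> 0"
  shows "matrix_inv A *v x = y \<longleftrightarrow> x = A *v y"
  using matrix_inv_vector_mult[OF assms] by metis

lemma det_matrix_inv_nonzero:
  fixes A :: "real^'n^'n"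
  assumes "det A \<noteq> 0"
  shows "det (matrix_inv A) \<noteq> 0"
  using matrix_inv_mult[OF assms] by (metis det_I det_mul mult_zero_right zero_neq_one)

lemma unimodular_matrix_inv_int_vec:
  fixes A :: "real^'n^'n"
  assumes "unimodular A" "int_vec x"
  shows "int_vec (matrix_inv A *v x)"
proof -
  have d: "det A = 1 \<or> det A = -1" and iA: "int_mat A"
    using assms unfolding unimodular_def by auto
  then have d0: "det A \<noteq> 0" by auto
  let ?y = "matrix_inv A *v x"
  have "A *v ?y = x" using matrix_inv_vector_mult(1)[OF d0] .
  then have "?y = (\<chi> k. det (\<chi> i j. if j = k then x$i else A$i$j) / det A)"
    using cramer[OF d0] by blast
  moreover have "det (\<chi> i j. if j = k then x$i else A$i$j) \<in> \<int>" for k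
    using iA assms(2) by (intro int_mat_det_Ints) (auto simp: int_mat_def int_vec_def)
  ultimately show ?thesis using d unfolding int_vec_def by auto
qed

lemma unimodular_matrix_inv_int_mat:
  fixes A :: "real^'n^'n"
  assumes "unimodular A"
  shows "int_mat (matrix_inv A)"
  unfolding int_mat_def
proof (intro allI)
  fix i j
  have "int_vec (matrix_inv A *v axis j 1)" by (rule unimodular_matrix_inv_int_vec[OF assms int_vec_axis])
  then show "matrix_inv A $ i $ j \<in> \<int>"
    by (simp add: int_vec_def matrix_vector_mult_basis column_def)
qed

section \<open>Lattices and residues\<close>

lemma LAT_I: "int_vec k \<Longrightarrow> A *v k \<in> LAT A"
  unfolding LAT_def by auto

lemma LAT_E: "x \<in> LAT A \<Longrightarrow> (\<And>k. int_vec k \<Longrightarrow> x = A *v k \<Longrightarrow> P) \<Longrightarrow> P"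
  unfolding LAT_def by auto

lemma LAT_zero: "0 \<in> LAT A"
  using LAT_I[OF int_vec_zero] by simp

lemma LAT_add: "x \<in> LAT A \<Longrightarrow> y \<in> LAT A \<Longrightarrow> x + y \<in> LAT A"
  by (metis LAT_E LAT_I int_vec_add matrix_vector_right_distrib)

lemma LAT_diff: "x \<in> LAT A \<Longrightarrow> y \<in> LAT A \<Longrightarrow> x - y \<in> LAT A"
  by (metis LAT_E LAT_I int_vec_diff matrix_vector_mult_diff_distrib)

lemma LAT_minus: "x \<in> LAT A \<Longrightarrow> - x \<in> LAT A"
  using LAT_diff[OF LAT_zero] by fastforce

lemma LAT_int_vec: "int_mat A \<Longrightarrow> x \<in> LAT A \<Longrightarrow> int_vec x"
  by (metis LAT_E int_vec_matrix_vector_mult)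

lemma LAT_mat_1: "x \<in> LAT (mat 1) \<longleftrightarrow> int_vec x"
  unfolding LAT_def by simp

lemma LAT_matrix_mult: "int_mat A \<Longrightarrow> x \<in> LAT B \<Longrightarrow> A *v x \<in> LAT (A ** B)"
  by (metis LAT_E LAT_I int_vec_matrix_vector_mult matrix_vector_mul_assoc)

lemma LAT_matrix_mult_iff:
  fixes W :: "real^'n^'n"
  assumes "det W \<noteq> 0"
  shows "x \<in> LAT (W ** A) \<longleftrightarrow> matrix_inv W *v x \<in> LAT A"
proof -
  have "x = (W ** A) *v k \<longleftrightarrow> matrix_inv W *v x = A *v k" for k
    using matrix_inv_vector_mult[OF assms] by (metis matrix_vector_mul_assoc)
  then show ?thesis unfolding LAT_def by simp
qed

lemma LAT_matrix_mult_unimodular: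
  assumes "unimodular U"
  shows "LAT (A ** U) = LAT A"
proof
  have "(A ** U) *v k = A *v (U *v k)" for k
    by (simp add: matrix_vector_mul_assoc)
  then show "LAT (A ** U) \<subseteq> LAT A"
    using assms unfolding unimodular_def LAT_def by (auto intro: int_vec_matrix_vector_mult)
  have dU: "det U \<noteq> 0" using assms by (auto simp: unimodular_def)
  have "A *v k = (A ** U) *v (matrix_inv U *v k)" for k
    by (simp add: matrix_vector_mul_assoc[symmetric] matrix_inv_vector_mult(1)[OF dU])
  then show "LAT A \<subseteq> LAT (A ** U)"
    using assms by (auto simp: LAT_def intro!: unimodular_matrix_inv_int_vec)
qed

lemma LAT_commute:
  assumes "int_mat A" and "A ** B = B ** A" and "x \<in> LAT B"
  shows "A *v x \<in> LAT B"
proof -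
  obtain k where "int_vec k" "x = B *v k" using assms(3) by (auto elim: LAT_E)
  then show ?thesis
    using assms(1,2) by (metis LAT_I int_vec_matrix_vector_mult matrix_vector_mul_assoc)
qed

lemma NN_zero: "0 \<in> NN A"
  unfolding NN_def by (auto simp: int_vec_zero intro!: exI[of _ 0])

lemma NN_int_vec: "r \<in> NN A \<Longrightarrow> int_vec r"
  unfolding NN_def by auto

lemma NN_matrix_mult:
  assumes "int_mat A" and "x \<in> NN B"
  shows "A *v x \<in> NN (A ** B)"
proof -
  obtain y where y: "\<forall>j. 0 \<le> y$j \<and> y$j < 1" "x = B *v y" and "int_vec x"
    using assms(2) unfolding NN_def by auto
  then have "int_vec (A *v x)" using assms(1) int_vec_matrix_vector_mult by blast
  moreover have "A *v x = (A ** B) *v y" using y(2) by (simp add: matrix_vector_mul_assoc)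
  ultimately show ?thesis unfolding NN_def using y(1) by auto
qed

lemma finite_vectors_with_coordinates_in:
  assumes "finite S"
  shows "finite {v::real^'n. \<forall>j. v$j \<in> S}"
proof -
  have "{v::real^'n. \<forall>j. v$j \<in> S} \<subseteq> vec_lambda ` (PiE UNIV (\<lambda>_. S))"
  proof
    fix v :: "real^'n" assume "v \<in> {v. \<forall>j. v$j \<in> S}"
    then have "(\<lambda>j. v$j) \<in> PiE UNIV (\<lambda>_. S)" by auto
    moreover have "v = vec_lambda (\<lambda>j. v$j)" by simp
    ultimately show "v \<in> vec_lambda ` (PiE UNIV (\<lambda>_. S))" by blast
  qed
  moreover have "finite (vec_lambda ` (PiE UNIV (\<lambda>_. S)))"
    using assms by (intro finite_imageI finite_PiE) auto
  ultimately show ?thesis by (rule finite_subset)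
qed

lemma NN_finite: "finite (NN A)"
proof -
  define B where "B = (\<Sum>i\<in>UNIV. \<Sum>j\<in>UNIV. \<bar>A$i$j\<bar>)"
  define S where "S = (of_int :: int \<Rightarrow> real) ` {-\<lceil>B\<rceil>..\<lceil>B\<rceil>}"
  have "NN A \<subseteq> {v. \<forall>j. v$j \<in> S}"
  proof
    fix k assume "k \<in> NN A"
    then obtain x where x: "\<forall>j. 0 \<le> x$j \<and> x$j < 1" "k = A *v x" and ik: "int_vec k"
      unfolding NN_def by auto
    show "k \<in> {v. \<forall>j. v$j \<in> S}"
    proof (intro CollectI allI)
      fix i
      have "\<bar>k$i\<bar> = \<bar>\<Sum>j\<in>UNIV. A$i$j * x$j\<bar>" using x by (simp add: matrix_vector_mult_def)
      also have "\<dots> \<le> (\<Sum>j\<in>UNIV. \<bar>A$i$j\<bar>)"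
      proof (rule order_trans[OF sum_abs sum_mono])
        fix j
        have "\<bar>x$j\<bar> \<le> 1" using x(1) by (simp add: less_imp_le)
        then show "\<bar>A$i$j * x$j\<bar> \<le> \<bar>A$i$j\<bar>" by (simp add: abs_mult mult_left_le)
      qed
      also have "\<dots> \<le> B" unfolding B_def
        by (rule member_le_sum[where f="\<lambda>i. \<Sum>j\<in>UNIV. \<bar>A$i$j\<bar>"]) (auto intro: sum_nonneg)
      finally have "\<bar>k$i\<bar> \<le> B" .
      moreover obtain z where z: "k$i = of_int z" using ik unfolding int_vec_def by (metis Ints_cases)
      ultimately have "\<bar>z\<bar> \<le> \<lceil>B\<rceil>" by linarith
      then show "k$i \<in> S" unfolding S_def using z by (intro image_eqI[of _ _ z]) auto
    qed
  qed
  moreover have "finite {v::real^'n. \<forall>j. v$j \<in> S}"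
    by (rule finite_vectors_with_coordinates_in) (simp add: S_def)
  ultimately show ?thesis by (rule finite_subset)
qed

lemma NN_unique:
  fixes A :: "real^'n^'n"
  assumes "det A \<noteq> 0" and "r \<in> NN A" and "r' \<in> NN A" and "r - r' \<in> LAT A"
  shows "r = r'"
proof -
  obtain x where x: "\<forall>j. 0 \<le> x$j \<and> x$j < 1" "r = A *v x" using assms(2) unfolding NN_def by auto
  obtain x' where x': "\<forall>j. 0 \<le> x'$j \<and> x'$j < 1" "r' = A *v x'" using assms(3) unfolding NN_def by auto
  obtain k where k: "int_vec k" "r - r' = A *v k" using assms(4) by (auto elim: LAT_E)
  have "A *v (x - x') = A *v k" using x x' k by (simp add: matrix_vector_mult_diff_distrib)
  then have xk: "x - x' = k" using matrix_vector_mult_cancel[OF assms(1)] by blast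
  have "k$j = 0" for j
  proof -
    obtain z :: int where z: "k$j = of_int z" using k(1) unfolding int_vec_def by (metis Ints_cases)
    have "-1 < k$j" "k$j < 1" using xk x(1)[rule_format, of j] x'(1)[rule_format, of j] by auto
    then have "-1 < z" "z < 1" using z by simp_all
    then show ?thesis using z by simp
  qed
  then have "k = 0" by (simp add: vec_eq_iff)
  then show ?thesis using k by simp
qed

lemma vfloor_add_frac:
  assumes "int_vec k" and "\<forall>j. 0 \<le> x$j \<and> x$j < 1"
  shows "vfloor (k + x) = k"
proof -
  have "of_int \<lfloor>k$j + x$j\<rfloor> = k$j" for j
  proof -
    obtain a where a: "k$j = of_int a" using assms(1) unfolding int_vec_def by (metis Ints_cases)
    then have "\<lfloor>k$j + x$j\<rfloor> = a" using assms(2) by (intro floor_unique) auto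
    then show ?thesis using a by simp
  qed
  then show ?thesis unfolding vfloor_def by (simp add: vec_eq_iff)
qed

lemma rem_exists:
  fixes A :: "real^'n^'n"
  assumes "int_mat A" and "det A \<noteq> 0" and "int_vec m"
  shows "\<exists>r. r \<in> NN A \<and> m - r \<in> LAT A"
proof -
  define x where "x = matrix_inv A *v m"
  have ifl: "int_vec (vfloor x)" unfolding int_vec_def vfloor_def by auto
  have r: "A *v (x - vfloor x) = m - A *v vfloor x" unfolding x_def
    by (simp add: matrix_vector_mult_diff_distrib matrix_inv_vector_mult[OF assms(2)])
  have "A *v (x - vfloor x) \<in> NN A" unfolding NN_def
  proof (intro CollectI conjI exI)
    show "int_vec (A *v (x - vfloor x))"
      unfolding r by (intro int_vec_diff assms(3) int_vec_matrix_vector_mult assms(1) ifl)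
    show "\<forall>j. 0 \<le> (x - vfloor x)$j \<and> (x - vfloor x)$j < 1" unfolding vfloor_def by auto linarith
  qed simp
  moreover have "m - A *v (x - vfloor x) \<in> LAT A" unfolding r using LAT_I[OF ifl] by simp
  ultimately show ?thesis by blast
qed

lemma
  fixes A :: "real^'n^'n"
  assumes "int_mat A" and "det A \<noteq> 0" and "int_vec m"
  shows rem_in_NN: "rem A m \<in> NN A"
    and rem_cong: "m - rem A m \<in> LAT A"
proof -
  obtain r where r: "r \<in> NN A \<and> m - r \<in> LAT A" using rem_exists[OF assms] by blast
  have "rem A m = r" unfolding rem_def
  proof (rule the_equality)
    fix r' assume r': "r' \<in> NN A \<and> m - r' \<in> LAT A"
    have "r' - r = (m - r) - (m - r')" by simp
    then have "r' - r \<in> LAT A" using r r' LAT_diff by metis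
    then show "r' = r" using NN_unique[OF assms(2)] r r' by blast
  qed (fact r)
  then show "rem A m \<in> NN A" "m - rem A m \<in> LAT A" using r by auto
qed

lemma rem_unique:
  fixes A :: "real^'n^'n"
  assumes "int_mat A" and "det A \<noteq> 0" and "int_vec m" and "r \<in> NN A" and "m - r \<in> LAT A"
  shows "rem A m = r"
proof -
  have "r - rem A m = (m - rem A m) - (m - r)" by simp
  then have "r - rem A m \<in> LAT A" using LAT_diff[OF rem_cong[OF assms(1-3)] assms(5)] by simp
  then show ?thesis using NN_unique[OF assms(2) assms(4) rem_in_NN[OF assms(1-3)]] by simp
qed

section \<open>Comaximal and coprime matrices\<close>

definition comaximal :: "real^'n^'n \<Rightarrow> real^'n^'n \<Rightarrow> bool" where
  "comaximal A B \<longleftrightarrow> LAT (mat 1) \<subseteq> LAT A + LAT B"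

lemma comaximalI:
  fixes A B :: "real^'n^'n"
  assumes "\<And>z. int_vec z \<Longrightarrow> \<exists>u v. int_vec u \<and> int_vec v \<and> z = A *v u + B *v v"
  shows "comaximal A B"
  unfolding comaximal_def
proof
  fix z :: "real^'n" assume "z \<in> LAT (mat 1)"
  then have "int_vec z" by (simp add: LAT_mat_1)
  then obtain u v where "int_vec u" "int_vec v" "z = A *v u + B *v v" using assms by blast
  then show "z \<in> LAT A + LAT B" by (auto intro: LAT_I)
qed

lemma comaximalE:
  fixes A B :: "real^'n^'n" and z :: "real^'n"
  assumes "comaximal A B" and "int_vec z"
  obtains u v where "int_vec u" "int_vec v" "z = A *v u + B *v v"
proof -
  have "z \<in> LAT A + LAT B" using assms unfolding comaximal_def by (auto simp: LAT_mat_1)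
  then show thesis using that by (auto elim!: set_plus_elim LAT_E)
qed

lemma comaximal_mat_1: "comaximal A (mat 1)"
  by (rule comaximalI) (auto intro: exI[of _ 0] simp: int_vec_zero)

lemma comaximal_mult_right:
  fixes A B C :: "real^'n^'n"
  assumes "comaximal A B" and "comaximal A C" and "A ** B = B ** A" and "int_mat B"
  shows "comaximal A (B ** C)"
proof (rule comaximalI)
  fix z :: "real^'n" assume "int_vec z"
  with assms(1) obtain u v where uv: "int_vec u" "int_vec v" "z = A *v u + B *v v"
    by (rule comaximalE)
  obtain u' v' where uv': "int_vec u'" "int_vec v'" "v = A *v u' + C *v v'"
    using assms(2) uv(2) by (rule comaximalE)
  have "z = A *v (u + B *v u') + (B ** C) *v v'"
    using uv(3) uv'(3) assms(3)
    by (simp add: matrix_vector_right_distrib matrix_vector_mul_assoc add.assoc)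
  then show "\<exists>u v. int_vec u \<and> int_vec v \<and> z = A *v u + (B ** C) *v v"
    using uv(1) uv'(1,2) assms(4) by (blast intro: int_vec_add int_vec_matrix_vector_mult)
qed

lemma comaximal_rem_mult_surj:
  fixes A B :: "real^'n^'n"
  assumes "int_mat A" "int_mat B" "det B \<noteq> 0" and "A ** B = B ** A" and "comaximal A B"
  shows "(\<lambda>r. rem B (A *v r)) ` NN B = NN B"
proof
  show "(\<lambda>r. rem B (A *v r)) ` NN B \<subseteq> NN B"
    using assms(1-3) by (auto intro: rem_in_NN int_vec_matrix_vector_mult NN_int_vec)
  show "NN B \<subseteq> (\<lambda>r. rem B (A *v r)) ` NN B"
  proof
    fix s assume s: "s \<in> NN B"
    obtain u v where uv: "int_vec u" "int_vec v" "s = A *v u + B *v v"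
      using assms(5) NN_int_vec[OF s] by (rule comaximalE)
    define r where "r = rem B u"
    have rN: "r \<in> NN B" unfolding r_def using rem_in_NN[OF assms(2,3) uv(1)] .
    have "A *v (u - r) \<in> LAT B"
      unfolding r_def by (rule LAT_commute[OF assms(1,4) rem_cong[OF assms(2,3) uv(1)]])
    moreover have "A *v r - s = B *v (- v) - A *v (u - r)"
      using uv(3) by (simp add: matrix_vector_mult_diff_distrib matrix_vector_mult_minus)
    ultimately have "A *v r - s \<in> LAT B"
      using LAT_I[OF int_vec_minus[OF uv(2)]] LAT_diff by metis
    then have "rem B (A *v r) = s"
      by (rule rem_unique[OF assms(2,3) int_vec_matrix_vector_mult[OF assms(1) NN_int_vec[OF rN]] s])
    then show "s \<in> (\<lambda>r. rem B (A *v r)) ` NN B" using rN by blast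
  qed
qed

lemma comaximal_cancel:
  fixes A B :: "real^'n^'n"
  assumes "int_mat A" "int_mat B" "det B \<noteq> 0" and "A ** B = B ** A" and "comaximal A B"
    and "int_vec a" and "A *v a \<in> LAT B"
  shows "a \<in> LAT B"
proof -
  let ?f = "\<lambda>r. rem B (A *v r)"
  have inj: "inj_on ?f (NN B)"
    by (rule eq_card_imp_inj_on[OF NN_finite]) (simp add: comaximal_rem_mult_surj[OF assms(1-5)])
  define r where "r = rem B a"
  have rN: "r \<in> NN B" unfolding r_def by (rule rem_in_NN[OF assms(2,3,6)])
  have ar: "a - r \<in> LAT B" unfolding r_def by (rule rem_cong[OF assms(2,3,6)])
  have "A *v r = A *v a - A *v (a - r)" by (simp add: matrix_vector_mult_diff_distrib)
  then have "A *v r \<in> LAT B" using LAT_diff[OF assms(7) LAT_commute[OF assms(1,4) ar]] by simp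
  then have "?f r = 0"
    by (intro rem_unique[OF assms(2,3) int_vec_matrix_vector_mult[OF assms(1) NN_int_vec[OF rN]] NN_zero])
      simp
  moreover have "?f 0 = 0" by (rule rem_unique[OF assms(2,3)]) (auto simp: int_vec_zero NN_zero LAT_zero)
  ultimately have "r = 0" using inj_onD[OF inj] rN NN_zero by metis
  then show ?thesis using ar by simp
qed

lemma LAT_inter_subset_LAT_mult:
  fixes A B :: "real^'n^'n"
  assumes "int_mat A" "int_mat B" "det B \<noteq> 0" and "A ** B = B ** A" and "comaximal A B"
    and "y \<in> LAT A" and "y \<in> LAT B"
  shows "y \<in> LAT (A ** B)"
proof -
  obtain a where a: "int_vec a" "y = A *v a" using assms(6) by (auto elim: LAT_E)
  then have "a \<in> LAT B" using comaximal_cancel[OF assms(1-5)] assms(7) by simp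
  then show ?thesis using a LAT_matrix_mult[OF assms(1)] by simp
qed

definition add_subgroup :: "(real^'n) set \<Rightarrow> bool" where
  "add_subgroup T \<longleftrightarrow> 0 \<in> T \<and> (\<forall>x\<in>T. \<forall>y\<in>T. x + y \<in> T) \<and> (\<forall>x\<in>T. - x \<in> T)"

lemma add_subgroup_zero: "add_subgroup T \<Longrightarrow> 0 \<in> T"
  unfolding add_subgroup_def by blast

lemma add_subgroup_add: "add_subgroup T \<Longrightarrow> x \<in> T \<Longrightarrow> y \<in> T \<Longrightarrow> x + y \<in> T"
  unfolding add_subgroup_def by blast

lemma add_subgroup_minus: "add_subgroup T \<Longrightarrow> x \<in> T \<Longrightarrow> - x \<in> T"
  unfolding add_subgroup_def by blast

lemma add_subgroup_diff: "add_subgroup T \<Longrightarrow> x \<in> T \<Longrightarrow> y \<in> T \<Longrightarrow> x - y \<in> T"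
  using add_subgroup_add[of T x "- y"] add_subgroup_minus[of T y] by simp

lemma add_subgroup_scaleR_of_nat: "add_subgroup T \<Longrightarrow> x \<in> T \<Longrightarrow> of_nat n *\<^sub>R x \<in> T"
  by (induction n) (auto simp: add_subgroup_zero add_subgroup_add algebra_simps)

lemma add_subgroup_scaleR_Ints:
  assumes "add_subgroup T" "x \<in> T" "c \<in> \<int>"
  shows "c *\<^sub>R x \<in> T"
proof -
  obtain z where z: "c = of_int z" using assms(3) by (metis Ints_cases)
  show ?thesis
  proof (cases "z \<ge> 0")
    case True
    then have "c = of_nat (nat z)" using z by simp
    then show ?thesis using add_subgroup_scaleR_of_nat[OF assms(1,2)] by simp
  next
    case False
    then have "c *\<^sub>R x = - (of_nat (nat (- z)) *\<^sub>R x)" using z by simp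
    then show ?thesis
      using add_subgroup_minus[OF assms(1) add_subgroup_scaleR_of_nat[OF assms(1,2)]] by simp
  qed
qed

lemma add_subgroup_sum:
  assumes "add_subgroup T" "\<forall>i\<in>I. f i \<in> T"
  shows "sum f I \<in> T"
  using assms(2)
  by (induction I rule: infinite_finite_induct) (auto simp: add_subgroup_zero[OF assms(1)] add_subgroup_add[OF assms(1)])

lemma add_subgroup_matrix_vector_mult:
  fixes D :: "real^'n^'n"
  assumes "add_subgroup T" "\<forall>b. column b D \<in> T" "int_vec x"
  shows "D *v x \<in> T"
proof -
  have "D *v x = (\<Sum>i\<in>UNIV. x$i *\<^sub>R column i D)"
    by (simp add: matrix_mult_sum scalar_mult_eq_scaleR)
  also have "\<dots> \<in> T"
    using assms by (intro add_subgroup_sum) (auto intro!: add_subgroup_scaleR_Ints simp: int_vec_def)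
  finally show ?thesis .
qed

lemma add_subgroup_LAT: "add_subgroup (LAT A)"
  unfolding add_subgroup_def using LAT_zero LAT_add LAT_minus by blast

lemma add_subgroup_set_plus:
  assumes "add_subgroup S" "add_subgroup T"
  shows "add_subgroup (S + T)"
  unfolding add_subgroup_def
proof (intro conjI ballI)
  show "0 \<in> S + T" using assms by (metis add_subgroup_zero add.right_neutral set_plus_intro)
next
  fix x y assume "x \<in> S + T" "y \<in> S + T"
  then obtain s t s' t' where st: "s \<in> S" "t \<in> T" "s' \<in> S" "t' \<in> T" "x = s + t" "y = s' + t'"
    by (auto elim!: set_plus_elim)
  have "(s + s') + (t + t') \<in> S + T" using assms st by (intro set_plus_intro add_subgroup_add)
  moreover have "x + y = (s + s') + (t + t')" using st by (simp add: algebra_simps)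
  ultimately show "x + y \<in> S + T" by simp
next
  fix x assume "x \<in> S + T"
  then obtain s t where "s \<in> S" "t \<in> T" "x = s + t" by (auto elim!: set_plus_elim)
  then have "- s + - t \<in> S + T" using assms by (intro set_plus_intro add_subgroup_minus)
  then show "- x \<in> S + T" using \<open>x = s + t\<close> by (simp add: algebra_simps)
qed

definition int_vecs_on :: "'n set \<Rightarrow> (real^'n) set" where
  "int_vecs_on K = {w. int_vec w \<and> (\<forall>j. j \<notin> K \<longrightarrow> w$j = 0)}"

lemma add_subgroup_int_vecs_on: "add_subgroup (int_vecs_on K)"
  unfolding add_subgroup_def int_vecs_on_def by (auto simp: int_vec_zero int_vec_add int_vec_minus)

lemma int_vecs_on_empty: "int_vecs_on {} = {0}"
  unfolding int_vecs_on_def by (auto simp: vec_eq_iff int_vec_zero)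

lemma int_vecs_on_insert:
  assumes "w \<in> int_vecs_on (insert k K)"
  shows "w - w$k *\<^sub>R axis k 1 \<in> int_vecs_on K" and "w$k \<in> \<int>"
  using assms unfolding int_vecs_on_def by (auto simp: int_vec_def axis_def)

lemma int_vecs_on_UNIV: "int_vecs_on UNIV = LAT (mat 1)"
  unfolding int_vecs_on_def by (auto simp: LAT_mat_1)

lemma left_divides_if_columns_in_LAT:
  fixes D A :: "real^'n^'n"
  assumes "int_mat D" and "\<forall>j. column j A \<in> LAT D"
  shows "left_divides D A"
proof -
  have "\<forall>j. \<exists>x. int_vec x \<and> column j A = D *v x" using assms(2) unfolding LAT_def by blast
  then obtain x where x: "\<forall>j. int_vec (x j) \<and> column j A = D *v x j" by metis
  define X where "X = (\<chi> i j. x j $ i)"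
  have "int_mat X" unfolding X_def int_mat_def using x by (auto simp: int_vec_def)
  moreover have "(D ** X)$i$j = A$i$j" for i j
  proof -
    have "(D ** X)$i$j = (D *v x j)$i"
      unfolding X_def by (simp add: matrix_matrix_mult_def matrix_vector_mult_def)
    also have "\<dots> = A$i$j" using x by (metis column_def vec_lambda_beta)
    finally show ?thesis .
  qed
  then have "A = D ** X" by (simp add: vec_eq_iff)
  ultimately show ?thesis unfolding left_divides_def using assms(1) by blast
qed

text \<open>Pigeonhole on the finitely many residues modulo A.\<close>

lemma exists_axis_multiple_in_LAT:
  fixes A :: "real^'n^'n"
  assumes "int_mat A" and "det A \<noteq> 0"
  shows "\<exists>j::nat. j > 0 \<and> of_nat j *\<^sub>R axis k 1 \<in> LAT A"
proof -
  define f where "f j = rem A (of_nat j *\<^sub>R axis k (1::real))" for j :: nat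
  have iv: "int_vec (of_nat j *\<^sub>R axis k (1::real))" for j :: nat
    by (rule int_vec_scaleR[OF _ int_vec_axis]) simp
  have "f ` UNIV \<subseteq> NN A" unfolding f_def using rem_in_NN[OF assms iv] by blast
  then have "\<not> inj f" using inj_on_finite[of f UNIV "NN A"] NN_finite by auto
  then obtain j1 j2 where "j1 \<noteq> j2" "f j1 = f j2" unfolding inj_def by blast
  then obtain a b where ab: "a < b" "f a = f b"
    by (cases "j1 < j2") (auto dest: sym intro: that[of j1 j2] that[of j2 j1])
  have "of_nat (b - a) *\<^sub>R axis k (1::real) =
      (of_nat b *\<^sub>R axis k 1 - f b) - (of_nat a *\<^sub>R axis k 1 - f a)"
    using ab by (simp add: of_nat_diff scaleR_diff_left)
  also have "\<dots> \<in> LAT A" unfolding f_def by (intro LAT_diff rem_cong[OF assms iv])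
  finally show ?thesis using ab(1) by (intro exI[of _ "b - a"]) simp
qed

lemma least_axis_multiple_in_add_subgroup:
  assumes T: "add_subgroup T" and "\<exists>j::nat. j > 0 \<and> of_nat j *\<^sub>R axis k 1 \<in> T"
  obtains q :: nat where "q > 0" "of_nat q *\<^sub>R axis k 1 \<in> T"
    "\<And>\<mu>. \<mu> \<in> \<int> \<Longrightarrow> \<mu> *\<^sub>R axis k 1 \<in> T \<Longrightarrow> \<exists>s\<in>\<int>. \<mu> = of_nat q * s"
proof -
  define P where "P j \<longleftrightarrow> j > 0 \<and> of_nat j *\<^sub>R axis k (1::real) \<in> T" for j :: nat
  define q where "q = (LEAST j. P j)"
  have "P q" unfolding q_def by (rule LeastI_ex) (use assms(2) P_def in blast)
  then have qT: "of_nat q *\<^sub>R axis k (1::real) \<in> T" and q0: "q > 0" using P_def by auto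
  have multiple: "\<exists>s\<in>\<int>. \<mu> = of_nat q * s" if mu: "\<mu> \<in> \<int>" "\<mu> *\<^sub>R axis k 1 \<in> T" for \<mu>
  proof -
    obtain z where z: "\<mu> = of_int z" using mu(1) by (metis Ints_cases)
    define d where "d = z div int q"
    define r where "r = z mod int q"
    have zdr: "z = int q * d + r" unfolding d_def r_def by simp
    have r0: "0 \<le> r" "r < int q" unfolding r_def using q0 by simp_all
    have "of_int r *\<^sub>R axis k (1::real)
        = \<mu> *\<^sub>R axis k 1 - of_int d *\<^sub>R (of_nat q *\<^sub>R axis k 1)"
      using z zdr by (simp add: algebra_simps)
    also have "\<dots> \<in> T" by (intro add_subgroup_diff[OF T mu(2)] add_subgroup_scaleR_Ints[OF T qT]) simp
    finally have rT: "of_int r *\<^sub>R axis k (1::real) \<in> T" .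
    have "r = 0"
    proof (rule ccontr)
      assume "r \<noteq> 0"
      then have "P (nat r)" unfolding P_def using rT r0 by simp
      then have "q \<le> nat r" unfolding q_def by (rule Least_le)
      then show False using r0 by simp
    qed
    then show ?thesis using z zdr by (intro bexI[of _ "of_int d"]) simp_all
  qed
  show thesis by (rule that[OF q0 qT multiple])
qed

lemma add_subgroup_subset_LAT_axis_complement:
  fixes T :: "(real^'n) set" and D :: "real^'n^'n" and q :: nat
  assumes T: "add_subgroup T" and T_int: "\<forall>t\<in>T. int_vec t" and colT: "\<forall>b. column b D \<in> T"
    and colD: "\<And>b. column b D = (if b = k then of_nat q *\<^sub>R axis k 1 else axis b 1 - c b *\<^sub>R axis k 1)"
    and c: "\<forall>b. c b \<in> \<int>"
    and multiple: "\<And>\<mu>. \<mu> \<in> \<int> \<Longrightarrow> \<mu> *\<^sub>R axis k 1 \<in> T \<Longrightarrow> \<exists>s\<in>\<int>. \<mu> = of_nat q * s"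
  shows "T \<subseteq> LAT D"
proof
  fix t assume tT: "t \<in> T"
  then have it: "int_vec t" using T_int by blast
  define W where "W = (\<Sum>b\<in>UNIV-{k}. t$b *\<^sub>R column b D)"
  define \<mu> where "\<mu> = t$k + (\<Sum>b\<in>UNIV-{k}. c b * t$b)"
  have W_eq: "W = (\<Sum>b\<in>UNIV-{k}. t$b *\<^sub>R axis b 1) - (\<Sum>b\<in>UNIV-{k}. c b * t$b) *\<^sub>R axis k 1"
  proof -
    have "W = (\<Sum>b\<in>UNIV-{k}. t$b *\<^sub>R axis b 1 - (c b * t$b) *\<^sub>R axis k 1)"
      unfolding W_def by (rule sum.cong) (auto simp: colD algebra_simps)
    then show ?thesis by (simp add: sum_subtractf scaleR_sum_left)
  qed
  have "t = (\<Sum>b\<in>UNIV. t$b *\<^sub>R axis b 1)"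
    using basis_expansion[of t] by (simp add: scalar_mult_eq_scaleR)
  also have "\<dots> = t$k *\<^sub>R axis k 1 + (\<Sum>b\<in>UNIV-{k}. t$b *\<^sub>R axis b 1)"
    by (rule sum.remove) simp_all
  finally have t_eq: "t - W = \<mu> *\<^sub>R axis k 1"
    unfolding W_eq \<mu>_def by (simp add: algebra_simps)
  have "W \<in> T" unfolding W_def using it colT
    by (intro add_subgroup_sum[OF T]) (auto intro!: add_subgroup_scaleR_Ints[OF T] simp: int_vec_def)
  then have "\<mu> *\<^sub>R axis k 1 \<in> T" using add_subgroup_diff[OF T tT] t_eq by metis
  moreover have "\<mu> \<in> \<int>" unfolding \<mu>_def using it c by (auto simp: int_vec_def intro!: Ints_sum Ints_mult)
  ultimately obtain s where s: "s \<in> \<int>" "\<mu> = of_nat q * s" using multiple by blast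
  define x where "x = (\<chi> b. if b = k then s else t$b)"
  have "int_vec x" unfolding x_def int_vec_def using s it by (auto simp: int_vec_def)
  moreover have "D *v x = t"
  proof -
    have "D *v x = (\<Sum>b\<in>UNIV. x$b *\<^sub>R column b D)"
      by (simp add: matrix_mult_sum scalar_mult_eq_scaleR)
    also have "\<dots> = x$k *\<^sub>R column k D + (\<Sum>b\<in>UNIV-{k}. x$b *\<^sub>R column b D)"
      by (rule sum.remove) simp_all
    also have "(\<Sum>b\<in>UNIV-{k}. x$b *\<^sub>R column b D) = W"
      unfolding W_def x_def by (rule sum.cong) auto
    also have "x$k *\<^sub>R column k D = \<mu> *\<^sub>R axis k 1"
      unfolding x_def using s by (simp add: colD)
    finally show ?thesis using t_eq by (simp add: algebra_simps)
  qed
  ultimately show "t \<in> LAT D" using LAT_I[of x D] by simp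
qed

text \<open>A subgroup T of the integer vectors which together with the axis e_k generates all of them
  and contains a positive multiple of e_k is a lattice LAT D: take for D the columns
  q e_k and e_b - c_b e_k, where q e_k is the least multiple in T and e_b \<equiv> c_b e_k modulo T.\<close>

lemma add_subgroup_eq_LAT:
  fixes T :: "(real^'n) set" and k :: 'n
  assumes T: "add_subgroup T" and T_int: "\<forall>t\<in>T. int_vec t"
    and T_axis: "\<forall>z. int_vec z \<longrightarrow> (\<exists>t c. t \<in> T \<and> c \<in> \<int> \<and> z = t + c *\<^sub>R axis k 1)"
    and "\<exists>j::nat. j > 0 \<and> of_nat j *\<^sub>R axis k 1 \<in> T"
  shows "\<exists>D. int_mat D \<and> T \<subseteq> LAT D \<and> (\<forall>b. column b D \<in> T)"
proof -
  obtain q :: nat where qT: "of_nat q *\<^sub>R axis k 1 \<in> T"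
    and multiple: "\<And>\<mu>. \<mu> \<in> \<int> \<Longrightarrow> \<mu> *\<^sub>R axis k 1 \<in> T \<Longrightarrow> \<exists>s\<in>\<int>. \<mu> = of_nat q * s"
    using least_axis_multiple_in_add_subgroup[OF T assms(4)] by blast
  have "\<forall>i. \<exists>c. c \<in> \<int> \<and> axis i 1 - c *\<^sub>R axis k 1 \<in> T"
  proof
    fix i
    obtain t c where "t \<in> T" "c \<in> \<int>" "axis i 1 = t + c *\<^sub>R axis k 1"
      using T_axis int_vec_axis by blast
    then show "\<exists>c. c \<in> \<int> \<and> axis i 1 - c *\<^sub>R axis k 1 \<in> T" by (intro exI[of _ c]) simp
  qed
  then obtain c where c: "\<forall>i. c i \<in> \<int> \<and> axis i 1 - c i *\<^sub>R axis k 1 \<in> T" by metis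
  define D :: "real^'n^'n" where "D = (\<chi> a b. if b = k then (if a = k then of_nat q else 0)
       else (if a = b then 1 else 0) - (if a = k then c b else 0))"
  have colD: "column b D = (if b = k then of_nat q *\<^sub>R axis k 1 else axis b 1 - c b *\<^sub>R axis k 1)"
    for b unfolding D_def column_def by (simp add: vec_eq_iff axis_def)
  have colT: "\<forall>b. column b D \<in> T" using colD qT c by simp
  have "T \<subseteq> LAT D"
    using add_subgroup_subset_LAT_axis_complement[OF T T_int colT colD _ multiple] c by blast
  moreover have "int_mat D" unfolding D_def int_mat_def using c by auto
  ultimately show ?thesis using colT by blast
qed

text \<open>Enlarging S by integer vectors supported on a maximal set K of coordinates that keeps it
  proper, any further coordinate k gives a subgroup of corank one in direction e_k.\<close>

lemma proper_add_subgroup_extends_to_axis_complement: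
  fixes S :: "(real^'n) set"
  assumes S: "add_subgroup S" and S_int: "S \<subseteq> LAT (mat 1)" and proper: "\<not> LAT (mat 1) \<subseteq> S"
  obtains T k where "add_subgroup T" "S \<subseteq> T" "\<forall>t\<in>T. int_vec t" "axis k 1 \<notin> T"
    "\<forall>z. int_vec z \<longrightarrow> (\<exists>t c. t \<in> T \<and> c \<in> \<int> \<and> z = t + c *\<^sub>R axis k 1)"
proof -
  define F where "F = {K. \<not> LAT (mat 1) \<subseteq> S + int_vecs_on K}"
  have "S + int_vecs_on {} = S" by (auto simp: int_vecs_on_empty set_plus_def)
  then have "{} \<in> F" using proper unfolding F_def by simp
  moreover have "finite F" by (rule finite_subset[of _ UNIV]) simp_all
  ultimately obtain K where K: "K \<in> F" "\<forall>K'\<in>F. K \<subseteq> K' \<longrightarrow> K = K'"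
    using finite_has_maximal[of F] by blast
  define T where "T = S + int_vecs_on K"
  have T: "add_subgroup T" unfolding T_def by (intro add_subgroup_set_plus S add_subgroup_int_vecs_on)
  have "0 \<in> int_vecs_on K" by (simp add: int_vecs_on_def int_vec_zero)
  then have "S \<subseteq> T" unfolding T_def using set_plus_intro[of _ S 0 "int_vecs_on K"] by fastforce
  have T_int: "\<forall>t\<in>T. int_vec t" unfolding T_def int_vecs_on_def
    using S_int by (auto elim!: set_plus_elim intro: int_vec_add simp: LAT_mat_1 subset_iff)
  have "LAT (mat 1) \<subseteq> S + int_vecs_on UNIV"
    using add_subgroup_zero[OF S] set_plus_intro[of 0 S _ "int_vecs_on UNIV"]
    unfolding int_vecs_on_UNIV by fastforce
  then have "K \<noteq> UNIV" using K(1) unfolding F_def by blast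
  then obtain k where k: "k \<notin> K" by blast
  then have "insert k K \<notin> F" using K(2) by blast
  then have all: "int_vec z \<Longrightarrow> z \<in> S + int_vecs_on (insert k K)" for z
    unfolding F_def by (auto simp: LAT_mat_1)
  have T_axis: "\<forall>z. int_vec z \<longrightarrow> (\<exists>t c. t \<in> T \<and> c \<in> \<int> \<and> z = t + c *\<^sub>R axis k 1)"
  proof (intro allI impI)
    fix z :: "real^'n" assume "int_vec z"
    then have "z \<in> S + int_vecs_on (insert k K)" by (rule all)
    then obtain s w where sw: "s \<in> S" "w \<in> int_vecs_on (insert k K)" "z = s + w"
      by (auto elim: set_plus_elim)
    have "s + (w - w$k *\<^sub>R axis k 1) \<in> T"
      unfolding T_def using sw(1) int_vecs_on_insert(1)[OF sw(2)] by blast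
    moreover have "z = (s + (w - w$k *\<^sub>R axis k 1)) + w$k *\<^sub>R axis k 1" using sw(3) by simp
    moreover have "w$k \<in> \<int>" by (rule int_vecs_on_insert(2)[OF sw(2)])
    ultimately show "\<exists>t c. t \<in> T \<and> c \<in> \<int> \<and> z = t + c *\<^sub>R axis k 1" by blast
  qed
  have "axis k 1 \<notin> T"
  proof
    assume "axis k 1 \<in> T"
    have "z \<in> T" if z: "int_vec z" for z
    proof -
      obtain t c where "t \<in> T" "c \<in> \<int>" "z = t + c *\<^sub>R axis k 1" using T_axis z by blast
      then show ?thesis
        using add_subgroup_add[OF T] add_subgroup_scaleR_Ints[OF T \<open>axis k 1 \<in> T\<close>] by simp
    qed
    then show False using K(1) unfolding F_def T_def by (auto simp: LAT_mat_1)
  qed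
  show thesis by (rule that[OF T \<open>S \<subseteq> T\<close> T_int \<open>axis k 1 \<notin> T\<close> T_axis])
qed

text \<open>A proper subgroup between LAT A + LAT B and the integer vectors would be a lattice LAT D
  with D a common, non-unimodular, left divisor of A and B.\<close>

lemma coprime_mat_imp_comaximal:
  fixes A B :: "real^'n^'n"
  assumes "int_mat A" "det A \<noteq> 0" "int_mat B" and "coprime_mat A B"
  shows "comaximal A B"
proof (rule ccontr)
  assume "\<not> comaximal A B"
  then have proper: "\<not> LAT (mat 1) \<subseteq> LAT A + LAT B" unfolding comaximal_def .
  have "LAT A + LAT B \<subseteq> LAT (mat 1)"
  proof
    fix x assume "x \<in> LAT A + LAT B"
    then obtain a b where "a \<in> LAT A" "b \<in> LAT B" "x = a + b" by (auto elim: set_plus_elim)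
    then show "x \<in> LAT (mat 1)"
      using LAT_int_vec[OF assms(1)] LAT_int_vec[OF assms(3)] by (simp add: LAT_mat_1 int_vec_add)
  qed
  then obtain T k where T: "add_subgroup T" and AB_T: "LAT A + LAT B \<subseteq> T"
    and T_int: "\<forall>t\<in>T. int_vec t" and "axis k 1 \<notin> T"
    and T_axis: "\<forall>z. int_vec z \<longrightarrow> (\<exists>t c. t \<in> T \<and> c \<in> \<int> \<and> z = t + c *\<^sub>R axis k 1)"
    by (rule proper_add_subgroup_extends_to_axis_complement
        [OF add_subgroup_set_plus[OF add_subgroup_LAT add_subgroup_LAT] _ proper])
  have A_T: "LAT A \<subseteq> T"
    using AB_T set_plus_intro[of _ "LAT A" 0 "LAT B", OF _ LAT_zero] by auto
  have B_T: "LAT B \<subseteq> T"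
    using AB_T set_plus_intro[of 0 "LAT A" _ "LAT B", OF LAT_zero] by auto
  have "\<exists>j::nat. j > 0 \<and> of_nat j *\<^sub>R axis k 1 \<in> T"
    using exists_axis_multiple_in_LAT[OF assms(1,2), of k] A_T by blast
  then obtain D where D: "int_mat D" "T \<subseteq> LAT D" "\<forall>b. column b D \<in> T"
    using add_subgroup_eq_LAT[OF T T_int T_axis] by blast
  have "column j C \<in> LAT D" if "LAT C \<subseteq> T" for C :: "real^'n^'n" and j
    using that D(2) LAT_I[OF int_vec_axis, of C j] by (auto simp: matrix_vector_mult_basis)
  then have "unimodular D"
    using assms(4) A_T B_T left_divides_if_columns_in_LAT[OF D(1)] unfolding coprime_mat_def by blast
  then have "D *v (matrix_inv D *v axis k 1) \<in> T"
    by (intro add_subgroup_matrix_vector_mult[OF T D(3)] unimodular_matrix_inv_int_vec int_vec_axis)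
  moreover have "det D \<noteq> 0" using \<open>unimodular D\<close> unfolding unimodular_def by auto
  ultimately show False using \<open>axis k 1 \<notin> T\<close> matrix_inv_vector_mult(1) by metis
qed

section \<open>The Chinese remainder theorem for matrix moduli\<close>

lemma mprod_Suc: "a \<le> b \<Longrightarrow> mprod G a b = G a ** mprod G (Suc a) b"
proof -
  assume "a \<le> b"
  then have "[a..<Suc b] = a # [Suc a..<Suc b]" by (intro upt_conv_Cons) simp
  then show ?thesis unfolding mprod_def by simp
qed

lemma mprod_empty: "b < a \<Longrightarrow> mprod G a b = mat 1"
  unfolding mprod_def by simp

locale coprime_family =
  fixes G :: "nat \<Rightarrow> real^'n^'n" and L :: nat
  assumes nonsingular: "i \<in> {1..L} \<Longrightarrow> nonsingular_int (G i)"
    and commute: "i \<in> {1..L} \<Longrightarrow> j \<in> {1..L} \<Longrightarrow> G i ** G j = G j ** G i"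
    and coprime: "i \<in> {1..L} \<Longrightarrow> j \<in> {1..L} \<Longrightarrow> i \<noteq> j \<Longrightarrow> coprime_mat (G i) (G j)"
begin

lemma nonsingular_mprod: "1 \<le> a \<Longrightarrow> nonsingular_int (mprod G a L)"
proof (induction "Suc L - a" arbitrary: a)
  case 0
  then show ?case by (simp add: mprod_empty nonsingular_int_def int_mat_mat_1)
next
  case (Suc n)
  then have aL: "a \<le> L" by simp
  have "nonsingular_int (mprod G (Suc a) L)" using Suc by simp
  then show ?case
    using Suc.prems aL nonsingular[of a] by (simp add: mprod_Suc nonsingular_int_matrix_mult)
qed

lemma commute_mprod: "j \<in> {1..L} \<Longrightarrow> 1 \<le> a \<Longrightarrow> G j ** mprod G a L = mprod G a L ** G j"
proof (induction "Suc L - a" arbitrary: a)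
  case 0
  then show ?case by (simp add: mprod_empty)
next
  case (Suc n)
  then have aL: "a \<le> L" by simp
  have IH: "G j ** mprod G (Suc a) L = mprod G (Suc a) L ** G j" using Suc by simp
  have "G j ** mprod G a L = (G j ** G a) ** mprod G (Suc a) L"
    using aL by (simp add: mprod_Suc matrix_mul_assoc)
  also have "\<dots> = G a ** (G j ** mprod G (Suc a) L)"
    using commute[of j a] Suc.prems aL by (simp add: matrix_mul_assoc)
  also have "\<dots> = mprod G a L ** G j" using aL by (simp add: IH mprod_Suc matrix_mul_assoc)
  finally show ?case .
qed

lemma comaximal_mprod: "j \<in> {1..L} \<Longrightarrow> j < a \<Longrightarrow> comaximal (G j) (mprod G a L)"
proof (induction "Suc L - a" arbitrary: a)
  case 0
  then show ?case by (simp add: mprod_empty comaximal_mat_1)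
next
  case (Suc n)
  then have aL: "a \<le> L" and a: "a \<in> {1..L}" by simp_all
  have "comaximal (G j) (G a)"
    using coprime[of j a] nonsingular[of j] nonsingular[of a] Suc.prems a
    by (intro coprime_mat_imp_comaximal) (auto simp: nonsingular_int_def)
  moreover have "comaximal (G j) (mprod G (Suc a) L)" using Suc by simp
  ultimately show ?case
    unfolding mprod_Suc[OF aL]
    using commute[of j a] nonsingular[of a] Suc.prems a
    by (intro comaximal_mult_right) (auto simp: nonsingular_int_def)
qed

lemma LAT_mprod_if_LAT_all:
  "1 \<le> a \<Longrightarrow> int_vec y \<Longrightarrow> (\<forall>i\<in>{a..L}. y \<in> LAT (G i)) \<Longrightarrow> y \<in> LAT (mprod G a L)"
proof (induction "Suc L - a" arbitrary: a)
  case 0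
  then show ?case by (simp add: mprod_empty LAT_mat_1)
next
  case (Suc n)
  then have aL: "a \<le> L" and a: "a \<in> {1..L}" by simp_all
  have "y \<in> LAT (G a ** mprod G (Suc a) L)"
  proof (rule LAT_inter_subset_LAT_mult)
    show "int_mat (G a)" using nonsingular[OF a] by (simp add: nonsingular_int_def)
    show "int_mat (mprod G (Suc a) L)" "det (mprod G (Suc a) L) \<noteq> 0"
      using nonsingular_mprod[of "Suc a"] by (simp_all add: nonsingular_int_def)
    show "G a ** mprod G (Suc a) L = mprod G (Suc a) L ** G a" by (rule commute_mprod) (use a in auto)
    show "comaximal (G a) (mprod G (Suc a) L)" by (rule comaximal_mprod) (use a in auto)
    show "y \<in> LAT (G a)" using Suc.prems aL by simp
    show "y \<in> LAT (mprod G (Suc a) L)" using Suc by simp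
  qed
  then show ?case using aL by (simp add: mprod_Suc)
qed

lemma NN_mprod_cong_unique:
  assumes "1 \<le> L" and "det W \<noteq> 0" and "unimodular U1"
    and "\<psi> \<in> NN (W ** mprod G 1 L ** U1)" "\<psi>' \<in> NN (W ** mprod G 1 L ** U1)"
    and "\<forall>i\<in>{1..L}. \<psi> - \<psi>' \<in> LAT (W ** G i)"
  shows "\<psi> = \<psi>'"
proof (rule NN_unique[OF _ assms(4,5)])
  have GL: "matrix_inv W *v (\<psi> - \<psi>') \<in> LAT (G i)" if "i \<in> {1..L}" for i
    using assms(6) that LAT_matrix_mult_iff[OF assms(2)] by blast
  have "int_vec (matrix_inv W *v (\<psi> - \<psi>'))"
    using GL[of 1] assms(1) nonsingular[of 1] by (auto simp: nonsingular_int_def intro: LAT_int_vec)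
  then have "matrix_inv W *v (\<psi> - \<psi>') \<in> LAT (mprod G 1 L ** U1)"
    using LAT_mprod_if_LAT_all[of 1] GL by (simp add: LAT_matrix_mult_unimodular[OF assms(3)])
  then show "\<psi> - \<psi>' \<in> LAT (W ** mprod G 1 L ** U1)"
    using LAT_matrix_mult_iff[OF assms(2), of _ "mprod G 1 L ** U1"] by (simp add: matrix_mul_assoc)
  show "det (W ** mprod G 1 L ** U1) \<noteq> 0"
    using assms(2,3) nonsingular_mprod[of 1] by (auto simp: det_mul nonsingular_int_def unimodular_def)
qed

end

section \<open>Norms and rounding\<close>

context
  fixes nrm :: "real^'n \<Rightarrow> real"
  assumes N: "is_norm nrm"
begin

lemma is_norm_eq_0: "nrm x = 0 \<longleftrightarrow> x = 0"
  using N unfolding is_norm_def by blast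

lemma is_norm_zero [simp]: "nrm 0 = 0"
  using is_norm_eq_0 by blast

lemma is_norm_scaleR: "nrm (c *\<^sub>R x) = \<bar>c\<bar> * nrm x"
  using N unfolding is_norm_def by blast

lemma is_norm_triangle: "nrm (x + y) \<le> nrm x + nrm y"
  using N unfolding is_norm_def by blast

lemma is_norm_minus: "nrm (- x) = nrm x"
  using is_norm_scaleR[of "-1" x] by simp

lemma is_norm_nonneg: "0 \<le> nrm x"
  using is_norm_triangle[of x "- x"] is_norm_minus[of x] by simp

lemma is_norm_diff_le: "nrm (x - y) \<le> nrm x + nrm y"
  using is_norm_triangle[of x "- y"] is_norm_minus[of y] by simp

lemma is_norm_sum_le: "nrm (sum f I) \<le> (\<Sum>i\<in>I. nrm (f i))"
  by (induction I rule: infinite_finite_induct)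
    (auto intro: order_trans[OF is_norm_triangle])

lemma is_norm_le_norm: "\<exists>C>0. \<forall>x. nrm x \<le> C * norm x"
proof (intro exI conjI allI)
  define C where "C = (\<Sum>i\<in>UNIV. nrm (axis i (1::real))) + 1"
  show "C > 0" unfolding C_def using is_norm_nonneg by (smt (verit) sum_nonneg)
  fix x :: "real^'n"
  have "x = (\<Sum>i\<in>UNIV. x$i *\<^sub>R axis i 1)"
    using basis_expansion[of x] by (simp add: scalar_mult_eq_scaleR)
  then have "nrm x \<le> (\<Sum>i\<in>UNIV. \<bar>x$i\<bar> * nrm (axis i 1))"
    using is_norm_sum_le[of "\<lambda>i. x$i *\<^sub>R axis i 1" UNIV] by (simp add: is_norm_scaleR)
  also have "\<dots> \<le> (\<Sum>i\<in>UNIV. norm x * nrm (axis i 1))"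
    by (intro sum_mono mult_right_mono component_le_norm_cart is_norm_nonneg)
  also have "\<dots> \<le> C * norm x" unfolding C_def by (simp add: sum_distrib_left[symmetric] algebra_simps)
  finally show "nrm x \<le> C * norm x" .
qed

text \<open>The lower bound is the minimum of the (continuous) nrm on the Euclidean unit sphere.\<close>

lemma norm_le_is_norm: "\<exists>c>0. \<forall>x. c * norm x \<le> nrm x"
proof -
  obtain C where C: "C > 0" "\<forall>x. nrm x \<le> C * norm x" using is_norm_le_norm by blast
  have "\<bar>nrm x - nrm y\<bar> \<le> C * dist x y" for x y
    using is_norm_diff_le[of x "x - y"] is_norm_diff_le[of y "y - x"] C(2)[rule_format, of "x - y"]
      C(2)[rule_format, of "y - x"] by (simp add: dist_norm norm_minus_commute abs_le_iff)
  then have "continuous_on UNIV nrm"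
    using C(1) by (intro lipschitz_on_continuous_on[of C] lipschitz_onI) (auto simp: dist_real_def)
  moreover obtain i :: 'n where True by blast
  then have "sphere (0::real^'n) 1 \<noteq> {}" using norm_axis_1[of i] by (metis empty_iff mem_sphere_0)
  ultimately obtain x0 where x0: "x0 \<in> sphere 0 1" "\<forall>y\<in>sphere 0 1. nrm x0 \<le> nrm y"
    using continuous_attains_inf[OF compact_sphere] continuous_on_subset by (metis subset_UNIV)
  have "nrm x0 > 0" using x0(1) is_norm_nonneg[of x0] is_norm_eq_0[of x0] by force
  moreover have "nrm x0 * norm x \<le> nrm x" for x
  proof (cases "x = 0")
    case False
    then have "nrm x0 \<le> nrm ((1 / norm x) *\<^sub>R x)" using x0 by simp
    then show ?thesis using False by (simp add: is_norm_scaleR field_simps)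
  qed simp
  ultimately show ?thesis by blast
qed

lemma opnorm_bound: "nrm (U *v x) \<le> opnorm nrm U * nrm x"
  and opnorm_nonneg: "0 \<le> opnorm nrm U"
proof -
  obtain C where C: "C > 0" "\<forall>x. nrm x \<le> C * norm x" using is_norm_le_norm by blast
  obtain c where c: "c > 0" "\<forall>x. c * norm x \<le> nrm x" using norm_le_is_norm by blast
  obtain K where K: "K > 0" "\<forall>x. norm (U *v x) \<le> norm x * K"
    using bounded_linear.pos_bounded[OF matrix_vector_mul_bounded_linear[of U]] by blast
  have "nrm (U *v y) \<le> C * K / c" if "nrm y = 1" for y
  proof -
    have "norm y \<le> 1 / c" using c that by (simp add: field_simps) (metis mult.commute)
    have "nrm (U *v y) \<le> C * (norm y * K)" using K C by (meson mult_left_mono less_imp_le order_trans)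
    also have "\<dots> \<le> C * ((1 / c) * K)" using \<open>norm y \<le> 1 / c\<close> C K
      by (intro mult_left_mono mult_right_mono) simp_all
    finally show ?thesis by simp
  qed
  then have "bdd_above ((\<lambda>x. nrm (U *v x)) ` {x. nrm x = 1})"
    by (intro bdd_aboveI[of _ "C * K / c"]) auto
  then have up: "nrm (U *v y) \<le> opnorm nrm U" if "nrm y = 1" for y
    unfolding opnorm_def using that by (intro cSUP_upper) simp_all
  have unit: "nrm ((1 / nrm x) *\<^sub>R x) = 1" if "x \<noteq> 0" for x
    using that is_norm_nonneg[of x] is_norm_eq_0[of x] by (simp add: is_norm_scaleR)
  show "0 \<le> opnorm nrm U"
    using up[OF unit[of "axis undefined 1"]] is_norm_nonneg order_trans by (auto simp: axis_eq_0_iff)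
  show "nrm (U *v x) \<le> opnorm nrm U * nrm x"
  proof (cases "x = 0")
    case False
    have "nrm (U *v ((1 / nrm x) *\<^sub>R x)) \<le> opnorm nrm U" by (rule up[OF unit[OF False]])
    then have "nrm (U *v x) / nrm x \<le> opnorm nrm U"
      using is_norm_nonneg[of x] by (simp add: is_norm_scaleR matrix_vector_mult_scaleR)
    then show ?thesis using False is_norm_nonneg[of x] is_norm_eq_0[of x]
      by (simp add: divide_le_eq mult.commute)
  qed simp
qed

lemma lat_min_le: "v \<in> LAT Lam \<Longrightarrow> v \<noteq> 0 \<Longrightarrow> lat_min nrm Lam \<le> nrm v"
  unfolding lat_min_def using is_norm_nonneg by (intro cInf_lower) (auto intro: bdd_belowI[of _ 0])

text \<open>A vector shorter than half the minimal distance rounds to the lattice point 0: the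
  closest point p satisfies nrm p \<le> nrm (p - w) + nrm w \<le> 2 nrm w.\<close>

lemma closest_point_map_eq_0:
  assumes Q: "closest_point_map nrm Lam Q" and w: "nrm w < lat_min nrm Lam / 2"
  shows "Q w = 0"
proof (rule ccontr)
  assume "Q w \<noteq> 0"
  have QL: "Q w \<in> LAT Lam" and "nrm (Q w - w) \<le> nrm (0 - w)"
    using Q LAT_zero unfolding closest_point_map_def by blast+
  then have "nrm (Q w) \<le> 2 * nrm w"
    using is_norm_triangle[of "Q w - w" w] is_norm_minus[of w] by simp
  then show False using lat_min_le[OF QL \<open>Q w \<noteq> 0\<close>] w by simp
qed

lemma opnorm_mult_diff_less:
  assumes "nrm x \<le> \<tau>" "nrm y \<le> \<tau>" and "\<tau> < lam / (4 * opnorm nrm U)"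
  shows "nrm (U *v (x - y)) < lam / 2"
proof -
  have "0 \<le> \<tau>" using assms(1) is_norm_nonneg[of x] by linarith
  then have pos: "0 < opnorm nrm U" using assms(3) opnorm_nonneg[of U] by (cases "opnorm nrm U = 0") auto
  have "nrm (U *v (x - y)) \<le> opnorm nrm U * (2 * \<tau>)"
    using opnorm_bound[of U "x - y"] is_norm_diff_le[of x y] assms(1,2) opnorm_nonneg[of U]
    by (smt (verit) mult_left_mono)
  also have "\<dots> < lam / 2" using assms(3) pos by (simp add: field_simps)
  finally show ?thesis .
qed

lemma is_norm_average_diff_le:
  assumes "L \<ge> 1" and "\<forall>i\<in>{1..L}. nrm (d i) \<le> \<tau>"
  shows "nrm ((1 / real L) *\<^sub>R (\<Sum>i=1..L. m + d i) - m) \<le> \<tau>"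
proof -
  have "(\<Sum>i=1..L. m + d i) = real L *\<^sub>R m + (\<Sum>i=1..L. d i)"
    by (simp only: sum.distrib sum_constant_scaleR card_atLeastAtMost) simp
  then have "(1 / real L) *\<^sub>R (\<Sum>i=1..L. m + d i) - m = (1 / real L) *\<^sub>R (\<Sum>i=1..L. d i)"
    using assms(1) by (simp add: scaleR_add_right)
  moreover have "nrm (\<Sum>i=1..L. d i) \<le> real L * \<tau>"
    using is_norm_sum_le[of d "{1..L}"] sum_mono[of "{1..L}" "\<lambda>i. nrm (d i)" "\<lambda>_. \<tau>"] assms(2) by simp
  ultimately show ?thesis using assms(1) by (simp add: is_norm_scaleR field_simps)
qed

end

section \<open>Analysis of Algorithm 2\<close>

text \<open>Step (iii) of Algorithm 2, for W = V^-1.\<close>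

definition crt_system :: "real^'n^'n \<Rightarrow> (nat \<Rightarrow> real^'n^'n) \<Rightarrow> nat \<Rightarrow> real^'n^'n
    \<Rightarrow> (nat \<Rightarrow> real^'n) \<Rightarrow> real^'n \<Rightarrow> bool" where
  "crt_system W G L U1 w \<psi> \<longleftrightarrow> \<psi> \<in> NN (W ** mprod G 1 L ** U1)
     \<and> congmod \<psi> 0 (W ** G 1) \<and> (\<forall>i\<in>{2..L}. congmod \<psi> (w i) (W ** G i))"

lemma alg2_eq:
  assumes "\<psi> = (THE \<psi>. crt_system (matrix_inv V) G L U1
                 (\<lambda>i. rem (matrix_inv V ** G i) (matrix_inv Lam *v Q (U *v (rt i - rt 1)))) \<psi>)"
  shows "alg2 Q U V Lam G L U1 rt i = (if i = 1 then matrix_inv (G 1) *v (V *v \<psi>)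
           else matrix_inv (G i) *v (V *v (\<psi> - matrix_inv Lam *v Q (U *v (rt i - rt 1)))))"
  unfolding alg2_def crt_system_def Let_def assms ..

lemma (in coprime_family) the_crt_system:
  assumes "1 \<le> L" "det W \<noteq> 0" "unimodular U1" and "crt_system W G L U1 w \<psi>"
  shows "(THE \<psi>. crt_system W G L U1 w \<psi>) = \<psi>"
proof (rule the_equality)
  show "crt_system W G L U1 w \<psi>" by (fact assms(4))
  fix \<psi>' assume \<psi>': "crt_system W G L U1 w \<psi>'"
  have "\<psi>' - \<psi> \<in> LAT (W ** G i)" if "i \<in> {1..L}" for i
  proof (cases "i = 1")
    case True
    then show ?thesis using assms(4) \<psi>' LAT_diff unfolding crt_system_def congmod_def by fastforce
  next
    case False
    then have "\<psi>' - w i \<in> LAT (W ** G i)" "\<psi> - w i \<in> LAT (W ** G i)"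
      using that assms(4) \<psi>' unfolding crt_system_def congmod_def by auto
    from LAT_diff[OF this] show ?thesis by simp
  qed
  then show "\<psi>' = \<psi>"
    using NN_mprod_cong_unique[OF assms(1-3)] assms(4) \<psi>' unfolding crt_system_def by blast
qed

locale alg2_setting = coprime_family G L
  for G :: "nat \<Rightarrow> real^'n^'n" and L :: nat +
  fixes M U V Lam U1 :: "real^'n^'n" and Q :: "real^'n \<Rightarrow> real^'n"
    and m :: "real^'n" and r n :: "nat \<Rightarrow> real^'n"
  assumes L_pos: "1 \<le> L"
    and M: "nonsingular_int M"
    and U: "unimodular U" and V: "unimodular V" and decomp: "U ** M ** V = Lam"
    and U1: "unimodular U1"
    and Q_shift: "l \<in> LAT Lam \<Longrightarrow> Q (w + l) = Q w + l"
    and m: "m \<in> A1 M G L U1"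
    and r: "i \<in> {1..L} \<Longrightarrow> r i = rem (M ** G i) m"
    and n: "i \<in> {1..L} \<Longrightarrow> m = (M ** G i) *v n i + r i"
begin

lemma int_mat_G: "i \<in> {1..L} \<Longrightarrow> int_mat (G i)" and det_G: "i \<in> {1..L} \<Longrightarrow> det (G i) \<noteq> 0"
  using nonsingular by (auto simp: nonsingular_int_def)

lemma nonsingular_MG: "i \<in> {1..L} \<Longrightarrow> nonsingular_int (M ** G i)"
  using nonsingular M by (simp add: nonsingular_int_matrix_mult)

lemma det_V: "det V \<noteq> 0"
  using V by (auto simp: unimodular_def)

lemma det_matrix_inv_V: "det (matrix_inv V) \<noteq> 0"
  by (rule det_matrix_inv_nonzero[OF det_V])

lemma int_mat_matrix_inv_V: "int_mat (matrix_inv V)"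
  by (rule unimodular_matrix_inv_int_mat[OF V])

lemma det_Lam: "det Lam \<noteq> 0"
  using U M V by (auto simp: decomp[symmetric] det_mul unimodular_def nonsingular_int_def)

lemma remainder_in_NN: "i \<in> {1..L} \<Longrightarrow> r i \<in> NN (M ** G i)"
  using r rem_in_NN m nonsingular_MG by (auto simp: A1_def nonsingular_int_def)

lemma int_vec_n: "i \<in> {1..L} \<Longrightarrow> int_vec (n i)"
proof -
  assume i: "i \<in> {1..L}"
  have MG: "int_mat (M ** G i)" "det (M ** G i) \<noteq> 0"
    using nonsingular_MG[OF i] by (simp_all add: nonsingular_int_def)
  have "m - r i \<in> LAT (M ** G i)" using r[OF i] rem_cong[OF MG] m by (simp add: A1_def)
  then obtain k where "int_vec k" "(M ** G i) *v n i = (M ** G i) *v k"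
    using n[OF i] by (auto elim: LAT_E)
  then show ?thesis using matrix_vector_mult_cancel[OF MG(2)] by simp
qed

lemma int_vec_G_n: "i \<in> {1..L} \<Longrightarrow> int_vec (G i *v n i)"
  using int_vec_matrix_vector_mult int_mat_G int_vec_n by blast

text \<open>The remainders differ by M (G_1 n_1 - G_i n_i), which U maps into LAT(Lam); hence the
  rounding in step (i) of the algorithm only sees the errors.\<close>

lemma Q_remainder_diff:
  assumes "i \<in> {1..L}"
  shows "matrix_inv Lam *v Q (U *v ((r i + dr i) - (r 1 + dr 1)))
    = matrix_inv Lam *v Q (U *v (dr i - dr 1)) + matrix_inv V *v (G 1 *v n 1 - G i *v n i)"
proof -
  let ?z = "G 1 *v n 1 - G i *v n i"
  have "r i - r 1 = M *v ?z"
    using n[OF assms] n[of 1] L_pos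
    by (simp add: matrix_vector_mult_diff_distrib matrix_vector_mul_assoc algebra_simps)
  also have "M *v ?z = (M ** V ** matrix_inv V) *v ?z"
    using matrix_mul_matrix_inv[OF det_V] by (simp add: matrix_mul_assoc[symmetric])
  finally have "U *v (r i - r 1) = Lam *v (matrix_inv V *v ?z)"
    by (simp add: decomp[symmetric] matrix_vector_mul_assoc matrix_mul_assoc)
  moreover have "Lam *v (matrix_inv V *v ?z) \<in> LAT Lam"
    using assms L_pos int_mat_matrix_inv_V
    by (intro LAT_I int_vec_matrix_vector_mult int_vec_diff int_vec_G_n) auto
  moreover have "U *v ((r i + dr i) - (r 1 + dr 1)) = U *v (dr i - dr 1) + U *v (r i - r 1)"
    by (simp add: algebra_simps)
  ultimately show ?thesis
    using Q_shift matrix_inv_vector_mult(2)[OF det_Lam] by (simp add: matrix_vector_right_distrib)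
qed

lemma first_folding_vector_in_NN: "n 1 \<in> NN (mprod G 2 L ** U1)"
proof -
  have 1: "1 \<in> {1..L}" using L_pos by simp
  obtain x where x: "\<forall>j. 0 \<le> x$j \<and> x$j < 1" "r 1 = (M ** G 1) *v x"
    using remainder_in_NN[OF 1] unfolding NN_def by auto
  have "det (M ** G 1) \<noteq> 0" using nonsingular_MG[OF 1] by (simp add: nonsingular_int_def)
  then have "matrix_inv (M ** G 1) *v m = n 1 + x"
    using n[OF 1] x(2) by (simp add: matrix_vector_right_distrib matrix_inv_vector_mult(2))
  then show ?thesis using m vfloor_add_frac[OF int_vec_n[OF 1] x(1)] unfolding A1_def by simp
qed

lemma theta_zero_if_alg2_correct:
  assumes "\<forall>i\<in>{1..L}. alg2 Q U V Lam G L U1 (\<lambda>i. r i + dr i) i = n i" and i: "i \<in> {2..L}"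
  shows "Q (U *v (dr i - dr 1)) = 0"
proof -
  define p where "p i = matrix_inv Lam *v Q (U *v ((r i + dr i) - (r 1 + dr 1)))" for i
  define \<psi> where "\<psi> = (THE \<psi>. crt_system (matrix_inv V) G L U1
    (\<lambda>i. rem (matrix_inv V ** G i) (p i)) \<psi>)"
  have out: "alg2 Q U V Lam G L U1 (\<lambda>i. r i + dr i) i
      = (if i = 1 then matrix_inv (G 1) *v (V *v \<psi>) else matrix_inv (G i) *v (V *v (\<psi> - p i)))"
    for i unfolding p_def by (rule alg2_eq) (simp add: \<psi>_def p_def)
  have i1: "i \<in> {1..L}" "i \<noteq> 1" and 1: "1 \<in> {1..L}" using i by auto
  have "matrix_inv (G 1) *v (V *v \<psi>) = n 1" using assms(1) 1 out[of 1] by auto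
  then have "V *v \<psi> = G 1 *v n 1" by (simp only: matrix_inv_vector_mult_eq_iff[OF det_G[OF 1]])
  moreover have "matrix_inv (G i) *v (V *v (\<psi> - p i)) = n i" using assms(1) i1 out[of i] by auto
  then have "V *v (\<psi> - p i) = G i *v n i"
    by (simp only: matrix_inv_vector_mult_eq_iff[OF det_G[OF i1(1)]])
  ultimately have "V *v p i = G 1 *v n 1 - G i *v n i"
    by (simp add: matrix_vector_mult_diff_distrib algebra_simps)
  then have "p i = matrix_inv V *v (G 1 *v n 1 - G i *v n i)"
    using matrix_inv_vector_mult(2)[OF det_V, of "p i"] by simp
  then have "matrix_inv Lam *v Q (U *v (dr i - dr 1)) = 0"
    using Q_remainder_diff[OF i1(1)] unfolding p_def by simp
  then show ?thesis by (simp add: matrix_inv_vector_mult_eq_iff[OF det_Lam])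
qed

lemma crt_system_folding_vector:
  assumes "\<forall>i\<in>{2..L}. Q (U *v (dr i - dr 1)) = 0"
  shows "crt_system (matrix_inv V) G L U1
    (\<lambda>i. rem (matrix_inv V ** G i) (matrix_inv Lam *v Q (U *v ((r i + dr i) - (r 1 + dr 1)))))
    (matrix_inv V *v (G 1 *v n 1))"
  unfolding crt_system_def congmod_def
proof (intro conjI ballI)
  have 1: "1 \<in> {1..L}" using L_pos by simp
  have "mprod G 1 L = G 1 ** mprod G 2 L" using mprod_Suc[OF L_pos, of G] by (simp add: numeral_2_eq_2)
  then show "matrix_inv V *v (G 1 *v n 1) \<in> NN (matrix_inv V ** mprod G 1 L ** U1)"
    using NN_matrix_mult[OF int_mat_matrix_inv_V NN_matrix_mult[OF int_mat_G[OF 1] first_folding_vector_in_NN]]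
    by (simp add: matrix_mul_assoc)
  show "matrix_inv V *v (G 1 *v n 1) - 0 \<in> LAT (matrix_inv V ** G 1)"
    using LAT_I[OF int_vec_n[OF 1]] by (simp add: matrix_vector_mul_assoc)
next
  fix i assume i: "i \<in> {2..L}"
  then have i1: "i \<in> {1..L}" by simp
  let ?z = "matrix_inv V *v (G 1 *v n 1 - G i *v n i)"
  have VG: "int_mat (matrix_inv V ** G i)" "det (matrix_inv V ** G i) \<noteq> 0"
    using int_mat_matrix_inv_V int_mat_G[OF i1] det_matrix_inv_V det_G[OF i1]
    by (simp_all add: int_mat_matrix_mult det_mul)
  have "int_vec ?z" using i1 L_pos
    by (intro int_vec_matrix_vector_mult int_mat_matrix_inv_V int_vec_diff int_vec_G_n) auto
  then have "?z - rem (matrix_inv V ** G i) ?z \<in> LAT (matrix_inv V ** G i)" by (rule rem_cong[OF VG])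
  moreover have "matrix_inv V *v (G 1 *v n 1) - ?z \<in> LAT (matrix_inv V ** G i)"
    using LAT_I[OF int_vec_n[OF i1]] by (simp add: matrix_vector_mult_diff_distrib matrix_vector_mul_assoc)
  ultimately show "matrix_inv V *v (G 1 *v n 1) - rem (matrix_inv V ** G i)
      (matrix_inv Lam *v Q (U *v ((r i + dr i) - (r 1 + dr 1)))) \<in> LAT (matrix_inv V ** G i)"
    using Q_remainder_diff[OF i1] assms i LAT_add by fastforce
qed

lemma alg2_correct_if_theta_zero:
  assumes "\<forall>i\<in>{2..L}. Q (U *v (dr i - dr 1)) = 0" and i: "i \<in> {1..L}"
  shows "alg2 Q U V Lam G L U1 (\<lambda>i. r i + dr i) i = n i"
proof -
  let ?p = "\<lambda>i. matrix_inv Lam *v Q (U *v ((r i + dr i) - (r 1 + dr 1)))"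
  let ?\<psi> = "matrix_inv V *v (G 1 *v n 1)"
  have "(THE \<psi>. crt_system (matrix_inv V) G L U1 (\<lambda>i. rem (matrix_inv V ** G i) (?p i)) \<psi>) = ?\<psi>"
    by (rule the_crt_system[OF L_pos det_matrix_inv_V U1 crt_system_folding_vector[OF assms(1)]])
  then have out: "alg2 Q U V Lam G L U1 (\<lambda>i. r i + dr i) i
      = (if i = 1 then matrix_inv (G 1) *v (V *v ?\<psi>) else matrix_inv (G i) *v (V *v (?\<psi> - ?p i)))"
    by (intro alg2_eq) simp
  show ?thesis
  proof (cases "i = 1")
    case True
    then show ?thesis
      using out matrix_inv_vector_mult(1)[OF det_V] matrix_inv_vector_mult(2)[OF det_G[OF i]] by simp
  next
    case False
    then have "?p i = matrix_inv V *v (G 1 *v n 1 - G i *v n i)"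
      using Q_remainder_diff[OF i] assms(1) i by simp
    then show ?thesis using False out
      by (simp add: matrix_inv_vector_mult matrix_vector_mult_diff_distrib det_V det_G[OF i]
          matrix_inv_vector_mult_eq_iff)
  qed
qed

lemma alg2_correct_iff:
  "(\<forall>i\<in>{1..L}. alg2 Q U V Lam G L U1 (\<lambda>i. r i + dr i) i = n i)
    \<longleftrightarrow> (\<forall>i\<in>{2..L}. Q (U *v (dr i - dr 1)) = 0)"
  using theta_zero_if_alg2_correct alg2_correct_if_theta_zero by blast

end

theorem theorem4:
  fixes M U V Lam U1 :: "real^'n^'n"
    and G :: "nat \<Rightarrow> real^'n^'n"
    and L :: nat
    and nrm :: "real^'n \<Rightarrow> real"
    and Q :: "real^'n \<Rightarrow> real^'n"
    and m :: "real^'n"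
    and r n dr :: "nat \<Rightarrow> real^'n"
  assumes L2: "L \<ge> 2"
    and M_ns: "nonsingular_int M"
    and G_ns: "\<forall>i\<in>{1..L}. nonsingular_int (G i)"
    and G_comm: "\<forall>i\<in>{1..L}. \<forall>j\<in>{1..L}. G i ** G j = G j ** G i"
    and G_coprime: "\<forall>i\<in>{1..L}. \<forall>j\<in>{1..L}. i \<noteq> j \<longrightarrow> coprime_mat (G i) (G j)"
    and snf: "unimodular U" "unimodular V" "int_mat Lam" "is_diag Lam" "U ** M ** V = Lam"
    and U1: "unimodular U1"
    and nrm: "is_norm nrm"
    and Q: "closest_point_map nrm Lam Q"
    and m: "m \<in> A1 M G L U1"
    and r: "\<forall>i\<in>{1..L}. r i = rem (M ** G i) m"
    and n: "\<forall>i\<in>{1..L}. m = (M ** G i) *v n i + r i"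
    and dr: "\<forall>i\<in>{1..L}. int_vec (r i + dr i)"
  shows
    "((\<forall>i\<in>{1..L}. alg2 Q U V Lam G L U1 (\<lambda>i. r i + dr i) i = n i)
        \<longleftrightarrow> (\<forall>i\<in>{2..L}. Q (U *v (dr i - dr 1)) = 0))
     \<and> ((\<forall>i\<in>{2..L}. nrm (U *v (dr i - dr 1)) < lat_min nrm Lam / 2)
        \<longrightarrow> (\<forall>i\<in>{2..L}. Q (U *v (dr i - dr 1)) = 0))
     \<and> (\<forall>\<tau>::real. (\<forall>i\<in>{1..L}. nrm (dr i) \<le> \<tau>) \<and> \<tau> < lat_min nrm Lam / (4 * opnorm nrm U)
        \<longrightarrow> (\<forall>i\<in>{2..L}. Q (U *v (dr i - dr 1)) = 0))
     \<and> (\<forall>\<tau>::real. (\<forall>i\<in>{1..L}. nrm (dr i) \<le> \<tau>)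
        \<longrightarrow> nrm ((1 / real L) *\<^sub>R (\<Sum>i=1..L. (M ** G i) *v n i + (r i + dr i)) - m) \<le> \<tau>)"
proof -
  interpret alg2_setting G L M U V Lam U1 Q m r n
    using L2 M_ns G_ns G_comm G_coprime snf(1,2,5) U1 Q m r n
    by unfold_locales (auto simp: closest_point_map_def)
  have rounds_to_0: "Q (U *v (dr i - dr 1)) = 0" if "nrm (U *v (dr i - dr 1)) < lat_min nrm Lam / 2" for i
    using closest_point_map_eq_0[OF nrm Q that] .
  have "(\<Sum>i=1..L. (M ** G i) *v n i + (r i + dr i)) = (\<Sum>i=1..L. m + dr i)"
    using n by (intro sum.cong) (auto simp: add.assoc)
  then have "nrm ((1 / real L) *\<^sub>R (\<Sum>i=1..L. (M ** G i) *v n i + (r i + dr i)) - m) \<le> \<tau>"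
    if "\<forall>i\<in>{1..L}. nrm (dr i) \<le> \<tau>" for \<tau>
    using is_norm_average_diff_le[OF nrm _ that] L2 by simp
  moreover have "nrm (U *v (dr i - dr 1)) < lat_min nrm Lam / 2"
    if "\<forall>i\<in>{1..L}. nrm (dr i) \<le> \<tau>" "\<tau> < lat_min nrm Lam / (4 * opnorm nrm U)" "i \<in> {2..L}" for \<tau> i
    by (rule opnorm_mult_diff_less[OF nrm _ _ that(2)]) (use that L2 in auto)
  ultimately show ?thesis using alg2_correct_iff rounds_to_0 by blast
qed

end
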